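(* Let $S\subset\mathbb P^1$ be finite, let $(\alpha_1(p),\alpha_2(p),\alpha_3(p))_{p\in S}$ be real numbers with $\max_i\alpha_i(p)-\min_i\alpha_i(p)<1$ for each $p$ and $\sum_{i=1}^3\sum_{p\in S}\alpha_i(p)=0$, and let $(d_1,d_2,d_3)\in\mathbb Z^3$. For $i=1,2$ let $\ell_i=\#\{p\in S:\alpha_{i+1}(p)>\alpha_i(p)\}$. Then there exists a semistable strongly parabolic system of Hodge bundles $(\mathcal E,\theta)$ of type $(1,1,1)$ and parabolic degree $0$, with $\mathcal E=\mathcal L_1\oplus\mathcal L_2\oplus\mathcal L_3$, $\mathcal L_i$ of degree $d_i$ carrying weights $\alpha_i(p)$, and $\theta_1,\theta_2$ nonzero, if and only if $$\sum_{p\in S}(\alpha_2(p)+\alpha_3(p))\le d_1\le d_2-2+\ell_1\le d_3-4+\ell_1+\ell_2\le-\sum_{p\in S}\alpha_3(p)-4+\ell_1+\ell_2$$ and $d_1+d_2+d_3=0$.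
   Context: A strongly parabolic system of Hodge bundles of type $(1,1,1)$ over $\mathbb P^1$ with parabolic structure at $S$: line bundles $\mathcal L_1,\mathcal L_2,\mathcal L_3$ with weights $\alpha_i(p)$ at $p\in S$, $\mathcal E=\mathcal L_1\oplus\mathcal L_2\oplus\mathcal L_3$, and a Higgs field $\theta$ given by $\theta_1:\mathcal L_1\to\mathcal L_2\otimes\Omega^1(\log S)$, $\theta_2:\mathcal L_2\to\mathcal L_3\otimes\Omega^1(\log S)$, $\theta(\mathcal L_3)=0$, such that $\mathrm{res}_p\theta_i=0$ whenever $\alpha_{i+1}(p)\le\alpha_i(p)$ (the residue must send each weight part into the part of the next strictly larger weight). The parabolic degree of a sum $\mathcal F$ of some of the $\mathcal L_i$ is $\sum\big(d_i+\sum_{p}\alpha_i(p)\big)$ over the summands. $(\mathcal E,\theta)$ is semistable if every nonzero subbundle $\mathcal F=\bigoplus_{i\in A}\mathcal L_i$ ($A\subset\{1,2,3\}$) with $\theta(\mathcal F)\subset\mathcal F\otimes\Omega^1(\log S)$ satisfies $\mathrm{pardeg}\,\mathcal F/\mathrm{rank}\,\mathcal F\le\mathrm{pardeg}\,\mathcal E/3$. *)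

theory Defs
  imports Complex_Main
begin

(* Model of P^1 over C: complex option, None = infinity = [1:0], Some z = [z:1].
   A global section of O(n) on P^1 is a homogeneous polynomial of degree n in (x,y),
   f = sum_{k=0}^n c_k x^k y^(n-k), encoded by its coefficient function c
   (c k = 0 for k > n; for n < 0 only the zero section). *)

definition sec_O :: "int \<Rightarrow> (nat \<Rightarrow> complex) \<Rightarrow> bool" where
  "sec_O n c \<longleftrightarrow> (\<forall>k. int k > n \<longrightarrow> c k = 0)"

(* value of the section at a point, in the standard local trivialisation *)
definition sec_eval :: "int \<Rightarrow> (nat \<Rightarrow> complex) \<Rightarrow> complex option \<Rightarrow> complex" where
  "sec_eval n c p = (case p of None \<Rightarrow> c (nat n) | Some z \<Rightarrow> (\<Sum>k\<le>nat n. c k * z ^ k))"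

(* Higgs field component theta_i : L_i -> L_{i+1} (x) Omega^1(log S) is a section of
   L_i^* (x) L_{i+1} (x) Omega^1(log S) = O(d_{i+1} - d_i - 2 + |S|);
   its residue at p in S vanishes iff the section vanishes at p. *)
definition higgs_deg :: "complex option set \<Rightarrow> (nat \<Rightarrow> int) \<Rightarrow> nat \<Rightarrow> int" where
  "higgs_deg S d i = d (i+1) - d i - 2 + int (card S)"

definition strongly_parabolic_hodge ::
  "complex option set \<Rightarrow> (nat \<Rightarrow> complex option \<Rightarrow> real) \<Rightarrow> (nat \<Rightarrow> int)
    \<Rightarrow> (nat \<Rightarrow> nat \<Rightarrow> complex) \<Rightarrow> bool" where
  "strongly_parabolic_hodge S \<alpha> d \<theta> \<longleftrightarrow>
     (\<forall>i\<in>{1,2}. sec_O (higgs_deg S d i) (\<theta> i) \<and>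
        (\<forall>p\<in>S. \<alpha> (i+1) p \<le> \<alpha> i p \<longrightarrow> sec_eval (higgs_deg S d i) (\<theta> i) p = 0))"

definition pardeg ::
  "complex option set \<Rightarrow> (nat \<Rightarrow> complex option \<Rightarrow> real) \<Rightarrow> (nat \<Rightarrow> int) \<Rightarrow> nat set \<Rightarrow> real" where
  "pardeg S \<alpha> d A = (\<Sum>i\<in>A. (real_of_int (d i) + (\<Sum>p\<in>S. \<alpha> i p)))"

(* F = sum_{i in A} L_i is theta-invariant; theta(L_3) = 0 *)
definition theta_invariant :: "(nat \<Rightarrow> nat \<Rightarrow> complex) \<Rightarrow> nat set \<Rightarrow> bool" where
  "theta_invariant \<theta> A \<longleftrightarrow> (\<forall>i\<in>A. i \<in> {1,2} \<longrightarrow> \<theta> i = (\<lambda>_. 0) \<or> i + 1 \<in> A)"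

definition semistable ::
  "complex option set \<Rightarrow> (nat \<Rightarrow> complex option \<Rightarrow> real) \<Rightarrow> (nat \<Rightarrow> int)
    \<Rightarrow> (nat \<Rightarrow> nat \<Rightarrow> complex) \<Rightarrow> bool" where
  "semistable S \<alpha> d \<theta> \<longleftrightarrow>
     (\<forall>A. A \<subseteq> {1,2,3} \<longrightarrow> A \<noteq> {} \<longrightarrow> theta_invariant \<theta> A \<longrightarrow>
        pardeg S \<alpha> d A / real (card A) \<le> pardeg S \<alpha> d {1,2,3} / 3)"

definition ell :: "complex option set \<Rightarrow> (nat \<Rightarrow> complex option \<Rightarrow> real) \<Rightarrow> nat \<Rightarrow> nat" where
  "ell S \<alpha> i = card {p\<in>S. \<alpha> (i+1) p > \<alpha> i p}"

end

(* A Higgs component theta_i is a section of O(d_(i+1) - d_i - 2 + |S|) whose residue must vanish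
   at the |S| - l_i points where the weights do not increase. A nonzero binary form of degree n
   vanishes at no more than n points of P^1, and the product of the linear forms of any n points
   is such a form; so a nonzero theta_i exists iff d_i <= d_(i+1) - 2 + l_i. Once both theta_i
   are nonzero, the only theta-invariant subsystems are L_3, L_2 + L_3 and E, so semistability in
   parabolic degree 0 means pardeg L_3 <= 0 and pardeg (L_2 + L_3) <= 0; with the weights summing
   to 0 these are the two outer inequalities of the chain. *)

theory Submission
  imports Defs "HOL-Computational_Algebra.Polynomial"
begin

lemma card_option_eq:
  assumes "finite Z"
  shows "card Z = card (Some -` Z) + of_bool (None \<in> Z)"
proof -
  have split: "Z = Some ` (Some -` Z) \<union> (Z \<inter> {None})"
    by (auto intro: option.exhaust)
  have "card Z = card (Some ` (Some -` Z)) + card (Z \<inter> {None})"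
    by (subst split, rule card_Un_disjoint) (use assms in \<open>auto intro: finite_vimageI\<close>)
  also have "card (Some ` (Some -` Z)) = card (Some -` Z)"
    by (rule card_image) simp
  finally show ?thesis
    by simp
qed

lemma sec_O_coeff_iff:
  assumes "0 \<le> n"
  shows "sec_O n c \<longleftrightarrow> (\<exists>q. c = coeff q \<and> degree q \<le> nat n)"
proof
  assume sec: "sec_O n c"
  then have "coeff (Abs_poly c) = c"
    unfolding sec_O_def by (intro Abs_poly_inverse) (auto simp: MOST_nat intro: exI[of _ "nat n"])
  moreover have "degree (Abs_poly c) \<le> nat n"
    using sec assms unfolding sec_O_def by (intro degree_le) (simp add: \<open>coeff (Abs_poly c) = c\<close>)
  ultimately show "\<exists>q. c = coeff q \<and> degree q \<le> nat n"
    by metis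
next
  assume "\<exists>q. c = coeff q \<and> degree q \<le> nat n"
  then show "sec_O n c"
    unfolding sec_O_def using assms by (auto intro!: coeff_eq_0)
qed

lemma sec_O_negative: "n < 0 \<Longrightarrow> sec_O n c \<Longrightarrow> c = (\<lambda>_. 0)"
  unfolding sec_O_def by (auto intro: less_le_trans)

lemma sec_eval_coeff_Some:
  assumes "degree q \<le> nat n"
  shows "sec_eval n (coeff q) (Some z) = poly q z"
proof -
  have "(\<Sum>k\<le>nat n. coeff q k * z ^ k) = (\<Sum>k\<le>degree q. coeff q k * z ^ k)"
    by (rule sum.mono_neutral_right) (use assms in \<open>auto simp: coeff_eq_0\<close>)
  then show ?thesis
    by (simp add: sec_eval_def poly_altdef)
qed

lemma sec_eval_coeff_None: "sec_eval n (coeff q) None = coeff q (nat n)"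
  by (simp add: sec_eval_def)

lemma coeff_eq_zero_fun_iff: "coeff q = (\<lambda>_. 0) \<longleftrightarrow> q = 0"
  by (metis coeff_0 poly_eqI)

lemma nonzero_sec_vanishing_card_le:
  assumes "finite Z" "sec_O n c" "c \<noteq> (\<lambda>_. 0)" "\<forall>p\<in>Z. sec_eval n c p = 0"
  shows "int (card Z) \<le> n"
proof -
  have "0 \<le> n"
    using sec_O_negative assms(2,3) by force
  then obtain q where c: "c = coeff q" and deg: "degree q \<le> nat n"
    using assms(2) sec_O_coeff_iff by blast
  have "q \<noteq> 0"
    using assms(3) c coeff_eq_zero_fun_iff by blast
  have "Some -` Z \<subseteq> {z. poly q z = 0}"
    using assms(4) c deg by (auto simp: sec_eval_coeff_Some)
  then have affine: "card (Some -` Z) \<le> degree q"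
    using card_mono[OF poly_roots_finite[OF \<open>q \<noteq> 0\<close>]] card_poly_roots_bound[OF \<open>q \<noteq> 0\<close>]
    by (meson le_trans)
  have infinity: "degree q < nat n" if "None \<in> Z"
  proof -
    have "coeff q (nat n) = 0"
      using assms(4)[rule_format, OF that] c by (simp add: sec_eval_coeff_None)
    then show ?thesis
      using deg \<open>q \<noteq> 0\<close> by (metis le_neq_implies_less leading_coeff_0_iff)
  qed
  show ?thesis
    using card_option_eq[OF assms(1)] affine infinity deg \<open>0 \<le> n\<close> by (cases "None \<in> Z") auto
qed

lemma ex_nonzero_sec_vanishing:
  assumes "finite Z" "int (card Z) \<le> n"
  shows "\<exists>c. sec_O n c \<and> c \<noteq> (\<lambda>_. 0) \<and> (\<forall>p\<in>Z. sec_eval n c p = 0)"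
proof -
  define q :: "complex poly" where "q = (\<Prod>z\<in>Some -` Z. [:-z, 1:])"
  have fin: "finite (Some -` Z)"
    using assms(1) by (auto intro: finite_vimageI)
  have "q \<noteq> 0"
    unfolding q_def using fin by (simp add: prod_zero_iff)
  have "degree q = card (Some -` Z)"
    unfolding q_def by (subst degree_prod_sum_eq) auto
  then have deg: "degree q + of_bool (None \<in> Z) \<le> nat n"
    using card_option_eq[OF assms(1)] assms(2) by (cases "None \<in> Z") auto
  show ?thesis
  proof (intro exI conjI ballI)
    show "sec_O n (coeff q)"
      using sec_O_coeff_iff deg assms(2) by auto
    show "coeff q \<noteq> (\<lambda>_. 0)"
      using \<open>q \<noteq> 0\<close> coeff_eq_zero_fun_iff by blast
    fix p assume "p \<in> Z"
    show "sec_eval n (coeff q) p = 0"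
    proof (cases p)
      case None
      then show ?thesis
        using \<open>p \<in> Z\<close> deg by (simp add: sec_eval_coeff_None coeff_eq_0)
    next
      case (Some z)
      then show ?thesis
        using \<open>p \<in> Z\<close> deg fin by (simp add: sec_eval_coeff_Some q_def poly_prod prod_zero_iff)
    qed
  qed
qed

lemma ex_nonzero_sec_vanishing_iff:
  assumes "finite Z"
  shows "(\<exists>c. sec_O n c \<and> c \<noteq> (\<lambda>_. 0) \<and> (\<forall>p\<in>Z. sec_eval n c p = 0)) \<longleftrightarrow> int (card Z) \<le> n"
  using nonzero_sec_vanishing_card_le[OF assms] ex_nonzero_sec_vanishing[OF assms] by blast

definition higgs_component ::
  "complex option set \<Rightarrow> (nat \<Rightarrow> complex option \<Rightarrow> real) \<Rightarrow> (nat \<Rightarrow> int) \<Rightarrow> nat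
    \<Rightarrow> (nat \<Rightarrow> complex) \<Rightarrow> bool" where
  "higgs_component S \<alpha> d i c \<longleftrightarrow>
     sec_O (higgs_deg S d i) c \<and>
     (\<forall>p\<in>S. \<alpha> (i+1) p \<le> \<alpha> i p \<longrightarrow> sec_eval (higgs_deg S d i) c p = 0)"

lemma strongly_parabolic_hodge_iff:
  "strongly_parabolic_hodge S \<alpha> d \<theta> \<longleftrightarrow>
     higgs_component S \<alpha> d 1 (\<theta> 1) \<and> higgs_component S \<alpha> d 2 (\<theta> 2)"
  by (simp add: strongly_parabolic_hodge_def higgs_component_def)

lemma card_weights_not_increasing:
  assumes "finite S"
  shows "int (card {p\<in>S. \<alpha> (i+1) p \<le> \<alpha> i p}) = int (card S) - int (ell S \<alpha> i)"
proof -
  have "{p\<in>S. \<alpha> (i+1) p \<le> \<alpha> i p} = S - {p\<in>S. \<alpha> (i+1) p > \<alpha> i p}"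
    by auto
  then show ?thesis
    using assms by (simp add: ell_def card_Diff_subset of_nat_diff card_mono)
qed

lemma ex_nonzero_higgs_component_iff:
  assumes "finite S"
  shows "(\<exists>c. higgs_component S \<alpha> d i c \<and> c \<noteq> (\<lambda>_. 0)) \<longleftrightarrow> d i \<le> d (i+1) - 2 + int (ell S \<alpha> i)"
proof -
  let ?Z = "{p\<in>S. \<alpha> (i+1) p \<le> \<alpha> i p}"
  have "(\<exists>c. higgs_component S \<alpha> d i c \<and> c \<noteq> (\<lambda>_. 0)) \<longleftrightarrow>
        (\<exists>c. sec_O (higgs_deg S d i) c \<and> c \<noteq> (\<lambda>_. 0) \<and> (\<forall>p\<in>?Z. sec_eval (higgs_deg S d i) c p = 0))"
    unfolding higgs_component_def by blast
  also have "\<dots> \<longleftrightarrow> int (card ?Z) \<le> higgs_deg S d i"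
    using assms by (intro ex_nonzero_sec_vanishing_iff) simp
  also have "\<dots> \<longleftrightarrow> d i \<le> d (i+1) - 2 + int (ell S \<alpha> i)"
    unfolding card_weights_not_increasing[OF assms] higgs_deg_def by linarith
  finally show ?thesis .
qed

lemma theta_invariant_iff:
  assumes "\<theta> 1 \<noteq> (\<lambda>_. 0)" "\<theta> 2 \<noteq> (\<lambda>_. 0)" "A \<subseteq> {1,2,3}" "A \<noteq> {}"
  shows "theta_invariant \<theta> A \<longleftrightarrow> A = {3} \<or> A = {2,3} \<or> A = {1,2,3}"
proof
  assume "theta_invariant \<theta> A"
  then have "1 \<in> A \<Longrightarrow> 2 \<in> A" "2 \<in> A \<Longrightarrow> 3 \<in> A"
    using assms(1,2) unfolding theta_invariant_def by (auto simp: numeral_2_eq_2 numeral_3_eq_3)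
  moreover have "3 \<in> A"
    using calculation assms(3,4) by blast
  ultimately show "A = {3} \<or> A = {2,3} \<or> A = {1,2,3}"
    using assms(3) by (cases "1 \<in> A"; cases "2 \<in> A") auto
qed (auto simp: theta_invariant_def)

lemma semistable_iff:
  assumes "\<theta> 1 \<noteq> (\<lambda>_. 0)" "\<theta> 2 \<noteq> (\<lambda>_. 0)"
  shows "semistable S \<alpha> d \<theta> \<longleftrightarrow>
    pardeg S \<alpha> d {3} \<le> pardeg S \<alpha> d {1,2,3} / 3 \<and>
    pardeg S \<alpha> d {2,3} / 2 \<le> pardeg S \<alpha> d {1,2,3} / 3"
proof -
  have "semistable S \<alpha> d \<theta> \<longleftrightarrow>
    (\<forall>A\<in>{{3}, {2,3}, {1,2,3}}. pardeg S \<alpha> d A / real (card A) \<le> pardeg S \<alpha> d {1,2,3} / 3)"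
    unfolding semistable_def using theta_invariant_iff[OF assms] by auto
  then show ?thesis
    by simp
qed

lemma ex_semistable_hodge_iff:
  assumes "finite S"
  shows "(\<exists>\<theta>. strongly_parabolic_hodge S \<alpha> d \<theta> \<and> semistable S \<alpha> d \<theta> \<and>
           pardeg S \<alpha> d {1,2,3} = 0 \<and> \<theta> 1 \<noteq> (\<lambda>_. 0) \<and> \<theta> 2 \<noteq> (\<lambda>_. 0)) \<longleftrightarrow>
         d 1 \<le> d 2 - 2 + int (ell S \<alpha> 1) \<and> d 2 \<le> d 3 - 2 + int (ell S \<alpha> 2) \<and>
         pardeg S \<alpha> d {3} \<le> 0 \<and> pardeg S \<alpha> d {2,3} \<le> 0 \<and> pardeg S \<alpha> d {1,2,3} = 0"
    (is "?hodge \<longleftrightarrow> ?theta1 \<and> ?theta2 \<and> ?slopes")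
proof -
  have "?theta1 \<longleftrightarrow> (\<exists>c. higgs_component S \<alpha> d 1 c \<and> c \<noteq> (\<lambda>_. 0))"
    using ex_nonzero_higgs_component_iff[OF assms, of \<alpha> d 1] by (simp add: numeral_2_eq_2)
  moreover have "?theta2 \<longleftrightarrow> (\<exists>c. higgs_component S \<alpha> d 2 c \<and> c \<noteq> (\<lambda>_. 0))"
    using ex_nonzero_higgs_component_iff[OF assms, of \<alpha> d 2] by simp
  moreover have "?hodge \<longleftrightarrow>
    (\<exists>c\<^sub>1 c\<^sub>2. higgs_component S \<alpha> d 1 c\<^sub>1 \<and> c\<^sub>1 \<noteq> (\<lambda>_. 0) \<and>
      higgs_component S \<alpha> d 2 c\<^sub>2 \<and> c\<^sub>2 \<noteq> (\<lambda>_. 0)) \<and> ?slopes"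
  proof
    assume ?hodge
    then show "(\<exists>c\<^sub>1 c\<^sub>2. higgs_component S \<alpha> d 1 c\<^sub>1 \<and> c\<^sub>1 \<noteq> (\<lambda>_. 0) \<and>
      higgs_component S \<alpha> d 2 c\<^sub>2 \<and> c\<^sub>2 \<noteq> (\<lambda>_. 0)) \<and> ?slopes"
      by (auto simp: strongly_parabolic_hodge_iff semistable_iff)
  next
    assume "(\<exists>c\<^sub>1 c\<^sub>2. higgs_component S \<alpha> d 1 c\<^sub>1 \<and> c\<^sub>1 \<noteq> (\<lambda>_. 0) \<and>
      higgs_component S \<alpha> d 2 c\<^sub>2 \<and> c\<^sub>2 \<noteq> (\<lambda>_. 0)) \<and> ?slopes"
    then obtain c\<^sub>1 c\<^sub>2 where "higgs_component S \<alpha> d 1 c\<^sub>1" "c\<^sub>1 \<noteq> (\<lambda>_. 0)"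
      "higgs_component S \<alpha> d 2 c\<^sub>2" "c\<^sub>2 \<noteq> (\<lambda>_. 0)" ?slopes
      by blast
    then show ?hodge
      by (intro exI[of _ "\<lambda>i. if i = 1 then c\<^sub>1 else c\<^sub>2"])
        (simp add: strongly_parabolic_hodge_iff semistable_iff)
  qed
  ultimately show ?thesis
    by blast
qed

theorem proposition9p1:
  fixes S :: "complex option set"
    and \<alpha> :: "nat \<Rightarrow> complex option \<Rightarrow> real"
    and d :: "nat \<Rightarrow> int"
  assumes "finite S"
    and "\<forall>p\<in>S. Max ((\<lambda>i. \<alpha> i p) ` {1,2,3}) - Min ((\<lambda>i. \<alpha> i p) ` {1,2,3}) < 1"
    and "(\<Sum>i\<in>{1,2,3}. \<Sum>p\<in>S. \<alpha> i p) = 0"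
  shows "(\<exists>\<theta>. strongly_parabolic_hodge S \<alpha> d \<theta> \<and> semistable S \<alpha> d \<theta>
              \<and> pardeg S \<alpha> d {1,2,3} = 0 \<and> \<theta> 1 \<noteq> (\<lambda>_. 0) \<and> \<theta> 2 \<noteq> (\<lambda>_. 0))
    \<longleftrightarrow>
     ((\<Sum>p\<in>S. \<alpha> 2 p + \<alpha> 3 p) \<le> real_of_int (d 1)
      \<and> real_of_int (d 1) \<le> real_of_int (d 2) - 2 + real (ell S \<alpha> 1)
      \<and> real_of_int (d 2) - 2 + real (ell S \<alpha> 1) \<le> real_of_int (d 3) - 4 + real (ell S \<alpha> 1) + real (ell S \<alpha> 2)
      \<and> real_of_int (d 3) - 4 + real (ell S \<alpha> 1) + real (ell S \<alpha> 2)
          \<le> - (\<Sum>p\<in>S. \<alpha> 3 p) - 4 + real (ell S \<alpha> 1) + real (ell S \<alpha> 2)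
      \<and> d 1 + d 2 + d 3 = 0)"
proof -
  let ?a = "\<lambda>i. \<Sum>p\<in>S. \<alpha> i p"
  have "pardeg S \<alpha> d {1,2,3} = d 1 + d 2 + d 3"
    using assms(3) by (simp add: pardeg_def)
  moreover have "pardeg S \<alpha> d {2,3} = d 2 + ?a 2 + d 3 + ?a 3"
    by (simp add: pardeg_def)
  moreover have "pardeg S \<alpha> d {3} = d 3 + ?a 3"
    by (simp add: pardeg_def)
  moreover have "(\<Sum>p\<in>S. \<alpha> 2 p + \<alpha> 3 p) = ?a 2 + ?a 3"
    by (rule sum.distrib)
  ultimately show ?thesis
    unfolding ex_semistable_hodge_iff[OF assms(1)] by linarith
qed

end
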